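(* Let $K_1$ and $K_2$ be oriented Legendrian knots of the same topological knot type with $tb(K_1)=-tb(K_2)$ and $rot(K_1)=-rot(K_2)$. Then for every permutation GL-rack $(X,\ast,u,d)$, $\operatorname{Col}_X(K_1)=\operatorname{Col}_X(K_2)$.
   Context: A rack is a set $X$ with a binary operation $\ast$ such that for every $y\in X$ the map $x\mapsto x\ast y$ is a bijection of $X$ and $(x\ast y)\ast z=(x\ast z)\ast(y\ast z)$ for all $x,y,z$. A GL-rack is a quadruple $(X,\ast,u,d)$ where $(X,\ast)$ is a rack and $u,d\colon X\to X$ are maps such that for all $x,y\in X$: $u(d(x\ast x))=d(u(x\ast x))=x$; $u(x\ast y)=u(x)\ast y$ and $d(x\ast y)=d(x)\ast y$; $x\ast u(y)=x\ast d(y)=x\ast y$. A permutation GL-rack is a GL-rack with $X$ finite and $x\ast y=\sigma(x)$ for all $x,y$, for a permutation $\sigma$ of $X$, with $u\circ d=\sigma^{-1}$. Legendrian knots lie in $(\mathbb{R}^3,\xi_{\mathrm{std}})$, $\xi_{\mathrm{std}}=\mathrm{span}\{\partial_y,\partial_x+y\partial_z\}$, and are represented by oriented front diagrams. For a front diagram $D$ of $K$ with writhe $w(D)$, $u(D)$ cusps traversed upward and $d(D)$ cusps traversed downward, $tb(K)=w(D)-\frac12(u(D)+d(D))$ and $rot(K)=\frac12(d(D)-u(D))$. Given a finite GL-rack $X$, a coloring of $D$ is an assignment of elements of $X$ to the semi-arcs of $D$ (segments bounded by undercrossings or cusps) such that, following the orientation through a cusp, the color changes from $x$ to $u(x)$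 if the cusp is traversed upward and to $d(x)$ if traversed downward; and at each crossing whose over-strand is colored $y$, if the under semi-arc on the right of the oriented over-strand is colored $x$, the one on its left is colored $x\ast y$. $\operatorname{Col}_X(K)$ is the number of colorings; it is a Legendrian isotopy invariant. *)

theory Defs
  imports "HOL-Analysis.Analysis"
begin

definition rack :: "'a set \<Rightarrow> ('a \<Rightarrow> 'a \<Rightarrow> 'a) \<Rightarrow> bool" where
  "rack X op \<longleftrightarrow>
     (\<forall>x\<in>X. \<forall>y\<in>X. op x y \<in> X) \<and>
     (\<forall>y\<in>X. bij_betw (\<lambda>x. op x y) X X) \<and>
     (\<forall>x\<in>X. \<forall>y\<in>X. \<forall>z\<in>X. op (op x y) z = op (op x z) (op y z))"

definition GL_rack :: "'a set \<Rightarrow> ('a \<Rightarrow> 'a \<Rightarrow> 'a) \<Rightarrow> ('a \<Rightarrow> 'a) \<Rightarrow> ('a \<Rightarrow> 'a) \<Rightarrow> bool" where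
  "GL_rack X op u d \<longleftrightarrow>
     rack X op \<and>
     (\<forall>x\<in>X. u x \<in> X) \<and> (\<forall>x\<in>X. d x \<in> X) \<and>
     (\<forall>x\<in>X. u (d (op x x)) = x \<and> d (u (op x x)) = x) \<and>
     (\<forall>x\<in>X. \<forall>y\<in>X. u (op x y) = op (u x) y \<and> d (op x y) = op (d x) y) \<and>
     (\<forall>x\<in>X. \<forall>y\<in>X. op x (u y) = op x y \<and> op x (d y) = op x y)"

definition perm_GL_rack :: "'a set \<Rightarrow> ('a \<Rightarrow> 'a \<Rightarrow> 'a) \<Rightarrow> ('a \<Rightarrow> 'a) \<Rightarrow> ('a \<Rightarrow> 'a) \<Rightarrow> bool" where
  "perm_GL_rack X op u d \<longleftrightarrow>
     finite X \<and> GL_rack X op u d \<and>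
     (\<exists>\<sigma>. bij_betw \<sigma> X X \<and> (\<forall>x\<in>X. \<forall>y\<in>X. op x y = \<sigma> x) \<and>
          (\<forall>x\<in>X. u (d x) = the_inv_into X \<sigma> x))"

text \<open>A knot is a 1-periodic map gamma : real => R^3 (points written (x,y,z)),
  injective on [0,1); the orientation is the direction of increasing parameter.
  The front projection is (x,z); the y-axis points into the page, so at a crossing
  the strand with smaller y (= smaller slope dz/dx) is the over-strand.\<close>

type_synonym R3 = "real \<times> real \<times> real"

definition gx :: "(real \<Rightarrow> R3) \<Rightarrow> real \<Rightarrow> real" where "gx \<gamma> t = fst (\<gamma> t)"
definition gy :: "(real \<Rightarrow> R3) \<Rightarrow> real \<Rightarrow> real" where "gy \<gamma> t = fst (snd (\<gamma> t))"
definition gz :: "(real \<Rightarrow> R3) \<Rightarrow> real \<Rightarrow> real" where "gz \<gamma> t = snd (snd (\<gamma> t))"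

definition dgx :: "(real \<Rightarrow> R3) \<Rightarrow> real \<Rightarrow> real" where
  "dgx \<gamma> t = fst (vector_derivative \<gamma> (at t))"
definition dgz :: "(real \<Rightarrow> R3) \<Rightarrow> real \<Rightarrow> real" where
  "dgz \<gamma> t = snd (snd (vector_derivative \<gamma> (at t)))"

definition vderiv_op :: "(real \<Rightarrow> R3) \<Rightarrow> real \<Rightarrow> R3" where
  "vderiv_op g = (\<lambda>t. vector_derivative g (at t))"

definition smooth_curve :: "(real \<Rightarrow> R3) \<Rightarrow> bool" where
  "smooth_curve \<gamma> \<longleftrightarrow> (\<forall>n t. ((vderiv_op ^^ n) \<gamma>) differentiable (at t))"

text \<open>Legendrian: smooth embedded closed curve tangent to xi_std = span{d_y, d_x + y d_z},
  i.e. z' = y x'.\<close>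
definition legendrian_knot :: "(real \<Rightarrow> R3) \<Rightarrow> bool" where
  "legendrian_knot \<gamma> \<longleftrightarrow>
     smooth_curve \<gamma> \<and> (\<forall>t. \<gamma> (t + 1) = \<gamma> t) \<and> inj_on \<gamma> {0..<1} \<and>
     (\<forall>t. vector_derivative \<gamma> (at t) \<noteq> 0) \<and>
     (\<forall>t. dgz \<gamma> t = gy \<gamma> t * dgx \<gamma> t)"

definition cusps :: "(real \<Rightarrow> R3) \<Rightarrow> real set" where
  "cusps \<gamma> = {t \<in> {0..<1}. dgx \<gamma> t = 0}"

text \<open>A cusp is traversed upward if it goes from the lower branch to the upper branch,
  i.e. z - y(t) x is strictly increasing near t (y(t) is the slope of the cusp).\<close>
definition cusp_up :: "(real \<Rightarrow> R3) \<Rightarrow> real \<Rightarrow> bool" where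
  "cusp_up \<gamma> t \<longleftrightarrow> (\<exists>e>0. strict_mono_on {t-e<..<t+e} (\<lambda>r. gz \<gamma> r - gy \<gamma> t * gx \<gamma> r))"

definition cusp_down :: "(real \<Rightarrow> R3) \<Rightarrow> real \<Rightarrow> bool" where
  "cusp_down \<gamma> t \<longleftrightarrow> (\<exists>e>0. strict_mono_on {t-e<..<t+e} (\<lambda>r. - (gz \<gamma> r - gy \<gamma> t * gx \<gamma> r)))"

definition crossings :: "(real \<Rightarrow> R3) \<Rightarrow> (real \<times> real) set" where
  "crossings \<gamma> = {(t, s). t \<in> {0..<1} \<and> s \<in> {0..<1} \<and> t \<noteq> s \<and>
                          gx \<gamma> t = gx \<gamma> s \<and> gz \<gamma> t = gz \<gamma> s}"

text \<open>(t,s): t is the parameter on the under-strand, s on the over-strand.\<close>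
definition undercrossings :: "(real \<Rightarrow> R3) \<Rightarrow> (real \<times> real) set" where
  "undercrossings \<gamma> = {(t, s) \<in> crossings \<gamma>. gy \<gamma> s < gy \<gamma> t}"

definition generic_front :: "(real \<Rightarrow> R3) \<Rightarrow> bool" where
  "generic_front \<gamma> \<longleftrightarrow>
     finite (cusps \<gamma>) \<and> finite (crossings \<gamma>) \<and>
     (\<forall>t\<in>cusps \<gamma>. (cusp_up \<gamma> t \<or> cusp_down \<gamma> t) \<and>
                     (\<exists>a. a \<noteq> 0 \<and> (dgx \<gamma> has_real_derivative a) (at t))) \<and>
     (\<forall>(t, s)\<in>crossings \<gamma>. t \<notin> cusps \<gamma> \<and> s \<notin> cusps \<gamma>) \<and>
     (\<forall>t\<in>{0..<1}. \<forall>s\<in>{0..<1}. \<forall>r\<in>{0..<1}. t \<noteq> s \<and> s \<noteq> r \<and> t \<noteq> r \<longrightarrow>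
        \<not> (gx \<gamma> t = gx \<gamma> s \<and> gz \<gamma> t = gz \<gamma> s \<and> gx \<gamma> t = gx \<gamma> r \<and> gz \<gamma> t = gz \<gamma> r))"

text \<open>Positive iff the under-strand passes from the
  right to the left of the oriented over-strand, iff the crossing is positive.\<close>
definition front_cross :: "(real \<Rightarrow> R3) \<Rightarrow> real \<Rightarrow> real \<Rightarrow> real" where
  "front_cross \<gamma> s t = dgx \<gamma> s * dgz \<gamma> t - dgz \<gamma> s * dgx \<gamma> t"

definition writhe :: "(real \<Rightarrow> R3) \<Rightarrow> int" where
  "writhe \<gamma> = (\<Sum>(t, s)\<in>undercrossings \<gamma>. if front_cross \<gamma> s t > 0 then 1 else -1)"

definition n_up :: "(real \<Rightarrow> R3) \<Rightarrow> nat" where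
  "n_up \<gamma> = card {t \<in> cusps \<gamma>. cusp_up \<gamma> t}"

definition n_down :: "(real \<Rightarrow> R3) \<Rightarrow> nat" where
  "n_down \<gamma> = card {t \<in> cusps \<gamma>. cusp_down \<gamma> t}"

definition tb :: "(real \<Rightarrow> R3) \<Rightarrow> real" where
  "tb \<gamma> = real_of_int (writhe \<gamma>) - (real (n_up \<gamma>) + real (n_down \<gamma>)) / 2"

definition rot :: "(real \<Rightarrow> R3) \<Rightarrow> real" where
  "rot \<gamma> = (real (n_down \<gamma>) - real (n_up \<gamma>)) / 2"

definition same_knot_type :: "(real \<Rightarrow> R3) \<Rightarrow> (real \<Rightarrow> R3) \<Rightarrow> bool" where
  "same_knot_type \<gamma>1 \<gamma>2 \<longleftrightarrow>
     (\<exists>H :: real \<Rightarrow> R3 \<Rightarrow> R3.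
        continuous_on ({0..1} \<times> UNIV) (\<lambda>(s, p). H s p) \<and>
        (\<forall>s\<in>{0..1}. \<exists>g. homeomorphism UNIV UNIV (H s) g) \<and>
        H 0 = id \<and> H 1 ` range \<gamma>1 = range \<gamma>2)"

text \<open>Break parameters: cusps and under-crossing parameters. Semi-arcs are the open
  parameter intervals between consecutive breaks (mod 1).\<close>
definition breaks :: "(real \<Rightarrow> R3) \<Rightarrow> real set" where
  "breaks \<gamma> = cusps \<gamma> \<union> fst ` undercrossings \<gamma>"

definition breaks_per :: "(real \<Rightarrow> R3) \<Rightarrow> real set" where
  "breaks_per \<gamma> = {t. t - of_int \<lfloor>t\<rfloor> \<in> breaks \<gamma>}"

text \<open>A coloring is a 1-periodic X-valued function of the parameter, locally constant away
  from breaks (hence constant on semi-arcs), with the jump rules at cusps and undercrossings.\<close>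
definition is_coloring :: "'a set \<Rightarrow> ('a \<Rightarrow> 'a \<Rightarrow> 'a) \<Rightarrow> ('a \<Rightarrow> 'a) \<Rightarrow> ('a \<Rightarrow> 'a)
      \<Rightarrow> (real \<Rightarrow> R3) \<Rightarrow> (real \<Rightarrow> 'a) \<Rightarrow> bool" where
  "is_coloring X op u d \<gamma> c \<longleftrightarrow>
     (\<forall>t. c t \<in> X) \<and> (\<forall>t. c (t + 1) = c t) \<and>
     (\<forall>t. t \<notin> breaks_per \<gamma> \<longrightarrow> (\<exists>e>0. \<forall>r. \<bar>r - t\<bar> < e \<longrightarrow> c r = c t)) \<and>
     (\<forall>t\<in>cusps \<gamma>. \<exists>e>0. \<forall>r1\<in>{t-e<..<t}. \<forall>r2\<in>{t<..<t+e}.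
         (cusp_up \<gamma> t \<longrightarrow> c r2 = u (c r1)) \<and> (cusp_down \<gamma> t \<longrightarrow> c r2 = d (c r1))) \<and>
     (\<forall>(t, s)\<in>undercrossings \<gamma>. \<exists>e>0. \<forall>r1\<in>{t-e<..<t}. \<forall>r2\<in>{t<..<t+e}.
         (front_cross \<gamma> s t > 0 \<longrightarrow> c r2 = op (c r1) (c s)) \<and>
         (front_cross \<gamma> s t < 0 \<longrightarrow> c r1 = op (c r2) (c s)))"

text \<open>Col_X: number of colorings, i.e. of assignments to semi-arcs (values at break
  parameters are forgotten).\<close>
definition Col :: "'a set \<Rightarrow> ('a \<Rightarrow> 'a \<Rightarrow> 'a) \<Rightarrow> ('a \<Rightarrow> 'a) \<Rightarrow> ('a \<Rightarrow> 'a)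
      \<Rightarrow> (real \<Rightarrow> R3) \<Rightarrow> nat" where
  "Col X op u d \<gamma> =
     card ((\<lambda>c t. if t \<in> breaks_per \<gamma> then undefined else c t) ` {c. is_coloring X op u d \<gamma> c})"

end

(* A coloring by a permutation GL-rack is determined by its color at one base point:
   following the knot once around, the color is transformed by sigma at each positive crossing,
   by sigma^-1 at each negative crossing, by u at each up cusp and by d at each down cusp, and
   these four maps commute. Hence Col_X(K) is the number of fixed points of the monodromy
   sigma^(p-n) u^U d^D, where p, n, U, D count positive and negative crossings and up and down
   cusps. Because tb = p - n - (U + D)/2 and rot = (D - U)/2, opposite invariants mean
   U1 + U2 = D1 + D2 and p1 + p2 = n1 + n2 + U1 + U2; as u d = sigma^-1, the two monodromies
   are then mutually inverse and so have the same fixed points. *)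

theory Submission
  imports Defs "HOL-Library.Multiset"
begin

lemma locally_constant_on_interval:
  fixes c :: "real \<Rightarrow> 'a"
  assumes "a \<le> b" and loc: "\<And>r. r \<in> {a..b} \<Longrightarrow> \<exists>e>0. \<forall>r'. \<bar>r' - r\<bar> < e \<longrightarrow> c r' = c r"
  shows "c b = c a"
proof -
  have "c constant_on {a..b}"
  proof (rule locally_constant_imp_constant)
    fix r assume r: "r \<in> {a..b}"
    then obtain e where e: "e > 0" "\<forall>r'. \<bar>r' - r\<bar> < e \<longrightarrow> c r' = c r" using loc by blast
    show "\<exists>T. openin (top_of_set {a..b}) T \<and> r \<in> T \<and> (\<forall>x\<in>T. c x = c r)"
    proof (intro exI conjI)
      show "openin (top_of_set {a..b}) ({a..b} \<inter> ball r e)" by auto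
      show "r \<in> {a..b} \<inter> ball r e" using r e by auto
      show "\<forall>x\<in>{a..b} \<inter> ball r e. c x = c r"
        using e(2) by (auto simp: dist_real_def abs_minus_commute)
    qed
  qed simp
  then show ?thesis using assms(1) by (auto simp: constant_on_def)
qed

lemma sorted_list_of_set_insert_greatest:
  fixes S :: "'a::linorder set"
  assumes "finite S" "\<forall>b\<in>S. b < m"
  shows "sorted_list_of_set (insert m S) = sorted_list_of_set S @ [m]"
proof -
  have "sorted_wrt (<) (sorted_list_of_set S @ [m]) \<and> set (sorted_list_of_set S @ [m]) = insert m S
        \<and> length (sorted_list_of_set S @ [m]) = card (insert m S)"
    using assms by (auto simp: sorted_wrt_append strict_sorted_list_of_set)
  then show ?thesis
    using sorted_list_of_set_unique[of "insert m S" "sorted_list_of_set S @ [m]"] assms(1) by blast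
qed

lemma periodic_add_int:
  fixes c :: "'a::ring_1 \<Rightarrow> 'b"
  assumes "\<And>t. c (t + 1) = c t"
  shows "c (t + of_int k) = c t"
proof (induction k rule: int_induct[where k = 0])
  case (step1 i)
  then show ?case using assms[of "t + of_int i"] by (simp add: add.assoc)
next
  case (step2 i)
  then show ?case using assms[of "t + of_int (i - 1)"] by (simp add: add.assoc)
qed simp

section \<open>Colorings of a circle with jumps\<close>

text \<open>An abstract coloring of the parameter circle R/Z: the color is locally constant except at
  the finitely many jumps B, where it changes by J b.\<close>
locale circle_jumps =
  fixes X :: "'a set" and B :: "real set" and J :: "real \<Rightarrow> 'a \<Rightarrow> 'a"
  assumes finite_jumps: "finite B" and jumps_in_unit: "B \<subseteq> {0..<1}"
    and jump_closed: "\<And>b x. b \<in> B \<Longrightarrow> x \<in> X \<Longrightarrow> J b x \<in> X"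
begin

definition jumps_per :: "real set" where
  "jumps_per = {t. t - of_int \<lfloor>t\<rfloor> \<in> B}"

definition jump_coloring :: "(real \<Rightarrow> 'a) \<Rightarrow> bool" where
  "jump_coloring c \<longleftrightarrow> (\<forall>t. c t \<in> X) \<and> (\<forall>t. c (t + 1) = c t) \<and>
     (\<forall>t. t \<notin> jumps_per \<longrightarrow> (\<exists>e>0. \<forall>r. \<bar>r - t\<bar> < e \<longrightarrow> c r = c t)) \<and>
     (\<forall>b\<in>B. \<exists>e>0. \<forall>r1\<in>{b-e<..<b}. \<forall>r2\<in>{b<..<b+e}. c r2 = J b (c r1))"

definition forget_jumps :: "(real \<Rightarrow> 'a) \<Rightarrow> real \<Rightarrow> 'a" where
  "forget_jumps c = (\<lambda>t. if t \<in> jumps_per then undefined else c t)"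

definition transport :: "real \<Rightarrow> 'a \<Rightarrow> 'a" where
  "transport t = fold (\<lambda>b g. J b \<circ> g) (sorted_list_of_set {b\<in>B. b < t}) id"

definition monodromy :: "'a \<Rightarrow> 'a" where
  "monodromy = fold (\<lambda>b g. J b \<circ> g) (sorted_list_of_set B) id"

definition top_jump :: real where
  "top_jump = Max (insert 0 B)"

text \<open>The base point lies as far below 0 as base + 1 lies above the last jump, so the
  period [base, base + 1] contains every jump in its interior.\<close>
definition base :: real where
  "base = (top_jump - 1) / 2"

definition into_period :: "real \<Rightarrow> real" where
  "into_period t = t - of_int \<lfloor>t - base\<rfloor>"

lemma top_jump_bounds: "0 \<le> top_jump" "top_jump < 1" "\<And>b. b \<in> B \<Longrightarrow> 0 \<le> b \<and> b \<le> top_jump"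
proof -
  have fin: "finite (insert 0 B)" using finite_jumps by simp
  have "top_jump \<in> insert 0 B" unfolding top_jump_def using fin by (rule Max_in) simp
  then show "0 \<le> top_jump" "top_jump < 1" using jumps_in_unit by auto
  fix b assume "b \<in> B"
  then show "0 \<le> b \<and> b \<le> top_jump" using jumps_in_unit fin unfolding top_jump_def by auto
qed

lemma base_bounds: "-1 < base" "base < 0" "top_jump = 2 * base + 1"
  using top_jump_bounds(1,2) by (auto simp: base_def field_simps)

lemma jump_inside_period: "b \<in> B \<Longrightarrow> base < b \<and> b < base + 1"
  using top_jump_bounds(3)[of b] base_bounds by auto

lemma base_not_jump: "base \<notin> B" and base_plus_one_not_jump: "base + 1 \<notin> B"
  using jump_inside_period by force+

lemma jumps_per_iff:
  assumes "base \<le> t" "t \<le> base + 1"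
  shows "t \<in> jumps_per \<longleftrightarrow> t \<in> B"
proof (cases "t < 0")
  case True
  then have "\<lfloor>t\<rfloor> = -1" using assms base_bounds by (simp add: floor_eq_iff)
  moreover have "t + 1 \<notin> B" using jump_inside_period assms by force
  moreover have "t \<notin> B" using top_jump_bounds(3) True by force
  ultimately show ?thesis by (simp add: jumps_per_def)
next
  case False
  then have "\<lfloor>t\<rfloor> = 0" using assms base_bounds by (simp add: floor_eq_iff)
  then show ?thesis by (simp add: jumps_per_def)
qed

lemma into_period_eq: "of_int k \<le> t - base \<Longrightarrow> t - base < of_int k + 1 \<Longrightarrow> into_period t = t - of_int k"
  unfolding into_period_def by (simp add: floor_unique)

lemma into_period_range: "base \<le> into_period t" "into_period t < base + 1"
  unfolding into_period_def by linarith+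

lemma into_period_base: "into_period base = base"
  by (simp add: into_period_def)

lemma into_period_add_one: "into_period (t + 1) = into_period t"
proof -
  have "\<lfloor>t + 1 - base\<rfloor> = \<lfloor>t - base\<rfloor> + 1"
    using floor_add_int[of "t - base" 1] by (simp add: algebra_simps)
  then show ?thesis by (simp add: into_period_def)
qed

lemma into_period_jumps_per: "into_period t \<in> jumps_per \<longleftrightarrow> t \<in> jumps_per"
  by (simp add: into_period_def jumps_per_def)

lemma jump_coloring_into_period: "jump_coloring c \<Longrightarrow> c (into_period t) = c t"
  unfolding into_period_def jump_coloring_def
  using periodic_add_int[of c t "- \<lfloor>t - base\<rfloor>"] by simp

lemma jump_isolated:
  assumes "b \<in> B"
  shows "\<exists>e>0. base \<le> b - e \<and> b + e \<le> base + 1 \<and> (\<forall>b'\<in>B. b' \<noteq> b \<longrightarrow> e \<le> \<bar>b - b'\<bar>)"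
proof -
  obtain \<delta> where \<delta>: "\<delta> > 0" "\<forall>b'\<in>B. b' \<noteq> b \<longrightarrow> \<delta> \<le> dist b b'"
    using finite_set_avoid[OF finite_jumps] by blast
  show ?thesis
    using \<delta> jump_inside_period[OF assms]
    by (intro exI[of _ "min \<delta> (min (b - base) (base + 1 - b))"]) (auto simp: dist_real_def)
qed

lemma transport_closed: "x \<in> X \<Longrightarrow> transport t x \<in> X"
proof -
  have "fold (\<lambda>b g. J b \<circ> g) bs g x \<in> X" if "set bs \<subseteq> B" "\<forall>y\<in>X. g y \<in> X" "x \<in> X" for bs g x
    using that
  proof (induction bs arbitrary: g)
    case (Cons b bs)
    then show ?case using jump_closed[of b] by simp
  qed simp
  moreover assume "x \<in> X"
  ultimately show ?thesis unfolding transport_def using finite_jumps by simp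
qed

lemma transport_before_jumps: "(\<And>b. b \<in> B \<Longrightarrow> t \<le> b) \<Longrightarrow> transport t = id"
proof -
  assume "\<And>b. b \<in> B \<Longrightarrow> t \<le> b"
  then have "{b\<in>B. b < t} = {}" by force
  then show ?thesis unfolding transport_def by (simp only: sorted_list_of_set_empty fold_simps(1))
qed

lemma transport_after_jumps: "(\<And>b. b \<in> B \<Longrightarrow> b < t) \<Longrightarrow> transport t = monodromy"
proof -
  assume "\<And>b. b \<in> B \<Longrightarrow> b < t"
  then have "{b\<in>B. b < t} = B" by force
  then show ?thesis by (simp add: transport_def monodromy_def)
qed

lemma transport_const:
  assumes "\<And>b. b \<in> B \<Longrightarrow> r \<le> b \<Longrightarrow> t \<le> b" and "r \<le> t"
  shows "transport t = transport r"
proof -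
  have "{b\<in>B. b < t} = {b\<in>B. b < r}" using assms by force
  then show ?thesis by (simp add: transport_def)
qed

lemma transport_across_jump:
  assumes "b \<in> B" and isolated: "\<forall>b'\<in>B. b' \<noteq> b \<longrightarrow> e \<le> \<bar>b - b'\<bar>"
    and "r1 \<in> {b-e<..<b}" "r2 \<in> {b<..<b+e}"
  shows "transport r2 = J b \<circ> transport r1"
proof -
  have before: "{b'\<in>B. b' < r1} = {b'\<in>B. b' < b}"
    using assms(3) isolated by force
  have after: "{b'\<in>B. b' < r2} = insert b {b'\<in>B. b' < b}"
    using assms(1,3,4) isolated by force
  have "sorted_list_of_set {b'\<in>B. b' < r2} = sorted_list_of_set {b'\<in>B. b' < b} @ [b]"
    unfolding after using finite_jumps by (intro sorted_list_of_set_insert_greatest) auto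
  then show ?thesis by (simp add: transport_def before)
qed

lemma jump_coloring_const:
  assumes c: "jump_coloring c" and "base \<le> r" "r \<le> t" "t \<le> base + 1"
    and no_jump: "\<And>b. b \<in> B \<Longrightarrow> b \<notin> {r..t}"
  shows "c t = c r"
proof (rule locally_constant_on_interval)
  fix s assume "s \<in> {r..t}"
  then have "s \<in> {base..base + 1}" "s \<notin> B" using no_jump assms(2-4) by auto
  then have "s \<notin> jumps_per" using jumps_per_iff by simp
  then show "\<exists>e>0. \<forall>s'. \<bar>s' - s\<bar> < e \<longrightarrow> c s' = c s"
    using c unfolding jump_coloring_def by blast
qed (rule assms(3))

lemma jump_coloring_across_last_jump:
  assumes c: "jump_coloring c" and t: "t \<in> {base..base + 1}" "t \<notin> B"
    and m: "m \<in> B" "m < t" and m_max: "\<And>b. b \<in> B \<Longrightarrow> b < t \<Longrightarrow> b \<le> m"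
  shows "\<exists>r1. r1 \<in> {base..base + 1} \<and> r1 \<notin> B \<and> r1 < m \<and>
    c t = J m (c r1) \<and> transport t = J m \<circ> transport r1"
proof -
  obtain e where e: "e > 0" "base \<le> m - e"
    and isolated: "\<forall>b'\<in>B. b' \<noteq> m \<longrightarrow> e \<le> \<bar>m - b'\<bar>"
    using jump_isolated[OF m(1)] by blast
  obtain e' where e': "e' > 0" "\<forall>r1\<in>{m-e'<..<m}. \<forall>r2\<in>{m<..<m+e'}. c r2 = J m (c r1)"
    using c m(1) unfolding jump_coloring_def by blast
  define r1 where "r1 = m - min e e' / 2"
  define r2 where "r2 = m + min (min e e') (t - m) / 2"
  have r1: "r1 \<in> {m-e<..<m}" "r1 \<in> {m-e'<..<m}" using e(1) e'(1) by (auto simp: r1_def)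
  have r2: "r2 \<in> {m<..<m+e}" "r2 \<in> {m<..<m+e'}" "r2 < t"
    using e(1) e'(1) m(2) by (auto simp: r2_def min_def field_simps)
  have "r1 \<notin> B"
  proof
    assume "r1 \<in> B"
    moreover have "r1 \<noteq> m" using r1(1) by simp
    ultimately have "e \<le> \<bar>m - r1\<bar>" using isolated by blast
    then show False using r1(1) by simp
  qed
  have no_jump: "t \<le> b" if "b \<in> B" "r2 \<le> b" for b
  proof (rule ccontr)
    assume "\<not> t \<le> b"
    then have "b \<le> m" using m_max[OF that(1)] by simp
    then show False using that(2) r2(1) by simp
  qed
  have "c t = c r2"
  proof (rule jump_coloring_const[OF c])
    show "base \<le> r2" using r2(1) jump_inside_period[OF m(1)] by simp
    show "r2 \<le> t" "t \<le> base + 1" using r2(3) t(1) by auto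
    show "b \<notin> {r2..t}" if "b \<in> B" for b
      using no_jump[OF that] that t(2) by (cases "b = t") auto
  qed
  moreover have "c r2 = J m (c r1)" using e'(2) r1(2) r2(2) by blast
  moreover have "transport t = transport r2"
    using no_jump less_imp_le[OF r2(3)] by (rule transport_const)
  moreover have "transport r2 = J m \<circ> transport r1"
    using m(1) isolated r1(1) r2(1) by (rule transport_across_jump)
  moreover have "r1 \<in> {base..base + 1}" using r1(1) e(2) m(2) t(1) by simp
  ultimately show ?thesis using \<open>r1 \<notin> B\<close> r1(1) by auto
qed

lemma jump_coloring_eq_transport:
  assumes c: "jump_coloring c"
  shows "t \<in> {base..base + 1} \<Longrightarrow> t \<notin> B \<Longrightarrow> c t = transport t (c base)"
proof (induction "card {b\<in>B. b < t}" arbitrary: t rule: less_induct)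
  case less
  show ?case
  proof (cases "{b\<in>B. b < t} = {}")
    case True
    then have no_jump: "t \<le> b" if "b \<in> B" for b
      using that not_le by blast
    have "c t = c base"
    proof (rule jump_coloring_const[OF c])
      show "b \<notin> {base..t}" if "b \<in> B" for b
        using no_jump[OF that] that less.prems(2) by (cases "b = t") auto
    qed (use less.prems(1) in auto)
    moreover have "transport t = id" using no_jump by (rule transport_before_jumps)
    ultimately show ?thesis by simp
  next
    case False
    define m where "m = Max {b\<in>B. b < t}"
    have fin: "finite {b\<in>B. b < t}" using finite_jumps by simp
    have "m \<in> {b\<in>B. b < t}" unfolding m_def using fin False by (rule Max_in)
    then have m: "m \<in> B" "m < t" by simp_all
    have "b \<le> m" if "b \<in> B" "b < t" for b
      unfolding m_def using fin that by (intro Max_ge) simp_all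
    then obtain r1 where r1: "r1 \<in> {base..base + 1}" "r1 \<notin> B" "r1 < m"
      and step: "c t = J m (c r1)" "transport t = J m \<circ> transport r1"
      using jump_coloring_across_last_jump[OF c less.prems m] by blast
    have "{b\<in>B. b < r1} \<subseteq> {b\<in>B. b < t}" using r1(3) m(2) by auto
    moreover have "m \<in> {b\<in>B. b < t} - {b\<in>B. b < r1}" using r1(3) m by simp
    ultimately have "{b\<in>B. b < r1} \<subset> {b\<in>B. b < t}" by blast
    then have "card {b\<in>B. b < r1} < card {b\<in>B. b < t}" by (rule psubset_card_mono[OF fin])
    then have "c r1 = transport r1 (c base)" using less.hyps r1(1,2) by blast
    then show ?thesis using step by simp
  qed
qed

text \<open>This is where x has to be a fixed point: just below the base point the transport is the
  whole monodromy, just above it the identity.\<close>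
lemma transport_into_period_near_base:
  assumes fixed: "monodromy x = x" and t: "into_period t = base" and r: "\<bar>r - t\<bar> < - base"
  shows "transport (into_period r) x = x"
proof -
  define k where "k = \<lfloor>t - base\<rfloor>"
  have t_eq: "t = base + of_int k" using t by (simp add: into_period_def k_def)
  show ?thesis
  proof (cases "t \<le> r")
    case True
    then have "r - t < - base" using r by simp
    then have "into_period r = r - of_int k"
      using t_eq True base_bounds(1) by (intro into_period_eq) auto
    then have "into_period r < 0" using t_eq \<open>r - t < - base\<close> by simp
    then have "transport (into_period r) = id"
      using top_jump_bounds(3) by (intro transport_before_jumps) force
    then show ?thesis by simp
  next
    case False
    then have "t - r < - base" using r by simp
    then have "into_period r = r - of_int (k - 1)"
      using t_eq False base_bounds(1) by (intro into_period_eq) auto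
    then have "top_jump < into_period r" using t_eq \<open>t - r < - base\<close> base_bounds(3) by simp
    then have "transport (into_period r) = monodromy"
      using top_jump_bounds(3) by (intro transport_after_jumps) force
    then show ?thesis using fixed by simp
  qed
qed

lemma transport_locally_constant:
  assumes "base < s" "s < base + 1" "s \<notin> B"
  shows "\<exists>e>0. \<forall>r. \<bar>r - s\<bar> < e \<longrightarrow> base < r \<and> r < base + 1 \<and> transport r = transport s"
proof -
  obtain \<delta> where \<delta>: "\<delta> > 0" "\<forall>b\<in>B. b \<noteq> s \<longrightarrow> \<delta> \<le> dist s b"
    using finite_set_avoid[OF finite_jumps] by blast
  define e where "e = min \<delta> (min (s - base) (base + 1 - s))"
  have "base < r \<and> r < base + 1 \<and> transport r = transport s" if r: "\<bar>r - s\<bar> < e" for r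
  proof (intro conjI)
    show "base < r" "r < base + 1" using r by (auto simp: e_def)
    have "b < r \<longleftrightarrow> b < s" if "b \<in> B" for b
    proof -
      have "\<delta> \<le> \<bar>s - b\<bar>" using \<delta>(2) that assms(3) by (auto simp: dist_real_def)
      then show ?thesis using r by (auto simp: e_def)
    qed
    then have "{b\<in>B. b < r} = {b\<in>B. b < s}" by blast
    then show "transport r = transport s" by (simp add: transport_def)
  qed
  moreover have "e > 0" using \<delta>(1) assms(1,2) by (simp add: e_def)
  ultimately show ?thesis by blast
qed

lemma transport_into_period_jump:
  assumes "b \<in> B"
  shows "\<exists>e>0. \<forall>r1\<in>{b-e<..<b}. \<forall>r2\<in>{b<..<b+e}.
           transport (into_period r2) x = J b (transport (into_period r1) x)"
proof -
  obtain e where e: "e > 0" "base \<le> b - e" "b + e \<le> base + 1"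
    and isolated: "\<forall>b'\<in>B. b' \<noteq> b \<longrightarrow> e \<le> \<bar>b - b'\<bar>"
    using jump_isolated[OF assms] by blast
  have near: "into_period r = r" if "b - e < r" "r < b + e" for r
    using that e(2,3) by (intro into_period_eq[of 0, simplified]) auto
  have "transport (into_period r2) x = J b (transport (into_period r1) x)"
    if "r1 \<in> {b-e<..<b}" "r2 \<in> {b<..<b+e}" for r1 r2
    using transport_across_jump[OF assms isolated that] near that by simp
  then show ?thesis using e(1) by blast
qed

lemma transport_into_period_locally_constant:
  assumes fixed: "monodromy x = x" and t: "t \<notin> jumps_per"
  shows "\<exists>e>0. \<forall>r. \<bar>r - t\<bar> < e \<longrightarrow> transport (into_period r) x = transport (into_period t) x"
proof -
  define s where "s = into_period t"
  have s: "base \<le> s" "s < base + 1" using into_period_range by (simp_all add: s_def)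
  have "s \<notin> B" using t jumps_per_iff[of s] s by (simp add: s_def into_period_jumps_per)
  show ?thesis
  proof (cases "s = base")
    case True
    then have near: "transport (into_period r) x = x" if "\<bar>r - t\<bar> < - base" for r
      using transport_into_period_near_base[OF fixed _ that] by (simp add: s_def)
    show ?thesis
    proof (intro exI conjI allI impI)
      show "0 < - base" using base_bounds(2) by simp
      fix r assume "\<bar>r - t\<bar> < - base"
      then show "transport (into_period r) x = transport (into_period t) x"
        using near[of r] near[of t] base_bounds(2) by simp
    qed
  next
    case False
    then have "base < s" using s(1) by simp
    then obtain e where e: "e > 0"
      and near: "\<forall>r. \<bar>r - s\<bar> < e \<longrightarrow> base < r \<and> r < base + 1 \<and> transport r = transport s"
      using transport_locally_constant s(2) \<open>s \<notin> B\<close> by blast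
    have "transport (into_period r) = transport s" if r: "\<bar>r - t\<bar> < e" for r
    proof -
      have "\<bar>(s + (r - t)) - s\<bar> < e" using r by simp
      then have in_period: "base < s + (r - t)" "s + (r - t) < base + 1"
        and "transport (s + (r - t)) = transport s" using near by blast+
      moreover have "into_period r = r - of_int \<lfloor>t - base\<rfloor>"
        using in_period by (intro into_period_eq) (auto simp: s_def into_period_def)
      then have "into_period r = s + (r - t)" by (simp add: s_def into_period_def[of t])
      ultimately show ?thesis by simp
    qed
    then show ?thesis using e(1) unfolding s_def by metis
  qed
qed

lemma fixed_point_jump_coloring:
  assumes x: "x \<in> X" "monodromy x = x"
  shows "jump_coloring (\<lambda>t. transport (into_period t) x)"
  unfolding jump_coloring_def
proof (intro conjI allI impI ballI)
  fix t
  show "transport (into_period t) x \<in> X" using transport_closed x(1) by simp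
  show "transport (into_period (t + 1)) x = transport (into_period t) x"
    by (simp add: into_period_add_one)
  assume "t \<notin> jumps_per"
  then show "\<exists>e>0. \<forall>r. \<bar>r - t\<bar> < e \<longrightarrow> transport (into_period r) x = transport (into_period t) x"
    using x(2) by (intro transport_into_period_locally_constant)
next
  fix b assume "b \<in> B"
  then show "\<exists>e>0. \<forall>r1\<in>{b-e<..<b}. \<forall>r2\<in>{b<..<b+e}.
      transport (into_period r2) x = J b (transport (into_period r1) x)"
    by (rule transport_into_period_jump)
qed

lemma forget_jumps_base: "forget_jumps c base = c base"
  using jumps_per_iff[of base] base_not_jump by (simp add: forget_jumps_def)

lemma transport_base: "transport base = id"
  using jump_inside_period by (intro transport_before_jumps) (simp add: less_imp_le)

lemma jump_coloring_base_fixed: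
  assumes c: "jump_coloring c"
  shows "c base \<in> X" "monodromy (c base) = c base"
proof -
  have "c (base + 1) = transport (base + 1) (c base)"
    using jump_coloring_eq_transport[OF c] base_plus_one_not_jump by simp
  moreover have "transport (base + 1) = monodromy"
    using jump_inside_period by (intro transport_after_jumps) simp
  moreover have "c (base + 1) = c base" using c by (simp add: jump_coloring_def)
  ultimately show "monodromy (c base) = c base" by simp
  show "c base \<in> X" using c by (simp add: jump_coloring_def)
qed

lemma forget_jumps_eqI:
  assumes c1: "jump_coloring c1" and c2: "jump_coloring c2" and "c1 base = c2 base"
  shows "forget_jumps c1 = forget_jumps c2"
proof
  fix t
  show "forget_jumps c1 t = forget_jumps c2 t"
  proof (cases "t \<in> jumps_per")
    case False
    define s where "s = into_period t"
    have s: "s \<in> {base..base + 1}" using into_period_range[of t] by (simp add: s_def)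
    then have "s \<notin> B"
      using False jumps_per_iff[of s] into_period_jumps_per[of t] by (simp add: s_def)
    then have "c1 s = c2 s"
      using jump_coloring_eq_transport[OF c1 s] jump_coloring_eq_transport[OF c2 s] assms(3) by simp
    then show ?thesis
      using False jump_coloring_into_period[OF c1] jump_coloring_into_period[OF c2]
      by (simp add: forget_jumps_def s_def)
  qed (simp add: forget_jumps_def)
qed

theorem card_jump_colorings: "card (forget_jumps ` {c. jump_coloring c}) = card {x\<in>X. monodromy x = x}"
proof (rule bij_betw_same_card[of "\<lambda>h. h base"], rule bij_betw_imageI)
  show "inj_on (\<lambda>h. h base) (forget_jumps ` {c. jump_coloring c})"
  proof (rule inj_onI)
    fix h1 h2 assume "h1 \<in> forget_jumps ` {c. jump_coloring c}" "h2 \<in> forget_jumps ` {c. jump_coloring c}"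
      and base_eq: "h1 base = h2 base"
    then obtain c1 c2 where c: "jump_coloring c1" "jump_coloring c2"
      and h: "h1 = forget_jumps c1" "h2 = forget_jumps c2" by blast
    have "c1 base = c2 base" using base_eq unfolding h forget_jumps_base .
    then show "h1 = h2" unfolding h using c by (intro forget_jumps_eqI)
  qed
  show "(\<lambda>h. h base) ` forget_jumps ` {c. jump_coloring c} = {x\<in>X. monodromy x = x}"
  proof (intro equalityI subsetI)
    fix x assume "x \<in> (\<lambda>h. h base) ` forget_jumps ` {c. jump_coloring c}"
    then obtain c where "jump_coloring c" "x = forget_jumps c base" by blast
    then show "x \<in> {x\<in>X. monodromy x = x}" using jump_coloring_base_fixed by (simp add: forget_jumps_base)
  next
    fix x assume x: "x \<in> {x\<in>X. monodromy x = x}"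
    define c where "c = (\<lambda>t. transport (into_period t) x)"
    have "jump_coloring c" unfolding c_def using x by (intro fixed_point_jump_coloring) auto
    then have c: "forget_jumps c \<in> forget_jumps ` {c. jump_coloring c}" by blast
    have "forget_jumps c base = x"
      by (simp add: forget_jumps_base c_def into_period_base transport_base)
    then show "x \<in> (\<lambda>h. h base) ` forget_jumps ` {c. jump_coloring c}"
      using rev_image_eqI[OF c, of x "\<lambda>h. h base"] by simp
  qed
qed

end

section \<open>Permutation GL-racks\<close>

text \<open>Extending the rack maps by the identity outside X makes them commute as functions.\<close>
definition extend_id :: "'a set \<Rightarrow> ('a \<Rightarrow> 'a) \<Rightarrow> 'a \<Rightarrow> 'a" where
  "extend_id X f x = (if x \<in> X then f x else x)"

lemma fixpoints_eq_if_inverse: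
  assumes "f \<circ> g = id" "g \<circ> f = id"
  shows "{x\<in>X. f x = x} = {x\<in>X. g x = x}"
  using assms by (metis (mono_tags, opaque_lifting) comp_apply id_apply)

datatype break_kind = Pos_crossing | Neg_crossing | Up_cusp | Down_cusp

locale permutation_GL_rack =
  fixes X :: "'a set" and op :: "'a \<Rightarrow> 'a \<Rightarrow> 'a" and u d :: "'a \<Rightarrow> 'a" and \<sigma> :: "'a \<Rightarrow> 'a"
  assumes GL: "GL_rack X op u d" and \<sigma>_bij: "bij_betw \<sigma> X X"
    and op_eq: "\<And>x y. x \<in> X \<Longrightarrow> y \<in> X \<Longrightarrow> op x y = \<sigma> x"
    and u_d: "\<And>x. x \<in> X \<Longrightarrow> u (d x) = the_inv_into X \<sigma> x"
begin

abbreviation \<sigma>inv :: "'a \<Rightarrow> 'a" where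
  "\<sigma>inv \<equiv> the_inv_into X \<sigma>"

lemma \<sigma>_closed: "x \<in> X \<Longrightarrow> \<sigma> x \<in> X"
  using \<sigma>_bij bij_betwE by blast

lemma \<sigma>inv_closed: "x \<in> X \<Longrightarrow> \<sigma>inv x \<in> X"
  using bij_betw_the_inv_into[OF \<sigma>_bij] bij_betwE by blast

lemma \<sigma>_\<sigma>inv: "x \<in> X \<Longrightarrow> \<sigma> (\<sigma>inv x) = x"
  using f_the_inv_into_f_bij_betw[OF \<sigma>_bij] by blast

lemma \<sigma>inv_\<sigma>: "x \<in> X \<Longrightarrow> \<sigma>inv (\<sigma> x) = x"
  using the_inv_into_f_f \<sigma>_bij bij_betw_imp_inj_on by metis

lemma u_closed: "x \<in> X \<Longrightarrow> u x \<in> X" and d_closed: "x \<in> X \<Longrightarrow> d x \<in> X"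
  using GL unfolding GL_rack_def by blast+

lemma u_\<sigma>: "x \<in> X \<Longrightarrow> u (\<sigma> x) = \<sigma> (u x)" and d_\<sigma>: "x \<in> X \<Longrightarrow> d (\<sigma> x) = \<sigma> (d x)"
proof -
  assume x: "x \<in> X"
  have "u (op x x) = op (u x) x" "d (op x x) = op (d x) x" using GL x unfolding GL_rack_def by blast+
  then show "u (\<sigma> x) = \<sigma> (u x)" "d (\<sigma> x) = \<sigma> (d x)" using op_eq x u_closed d_closed by simp_all
qed

lemma d_u: "x \<in> X \<Longrightarrow> d (u x) = \<sigma>inv x"
proof -
  assume x: "x \<in> X"
  have "d (u (op (\<sigma>inv x) (\<sigma>inv x))) = \<sigma>inv x" using GL \<sigma>inv_closed[OF x] unfolding GL_rack_def by blast
  then show ?thesis using op_eq \<sigma>inv_closed[OF x] \<sigma>_\<sigma>inv[OF x] by simp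
qed

lemma u_\<sigma>inv: "x \<in> X \<Longrightarrow> u (\<sigma>inv x) = \<sigma>inv (u x)"
  by (metis \<sigma>_\<sigma>inv \<sigma>inv_\<sigma> \<sigma>inv_closed u_\<sigma> u_closed)

lemma d_\<sigma>inv: "x \<in> X \<Longrightarrow> d (\<sigma>inv x) = \<sigma>inv (d x)"
  by (metis \<sigma>_\<sigma>inv \<sigma>inv_\<sigma> \<sigma>inv_closed d_\<sigma> d_closed)

lemmas pointwise_laws = \<sigma>_closed \<sigma>inv_closed \<sigma>_\<sigma>inv \<sigma>inv_\<sigma> u_closed d_closed
  u_\<sigma> d_\<sigma> u_d d_u u_\<sigma>inv d_\<sigma>inv

text \<open>The change of color across a break of each kind; at a negative crossing the rule
  c r1 = c r2 * c s is solved for c r2.\<close>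
primrec kind_action :: "break_kind \<Rightarrow> 'a \<Rightarrow> 'a" where
  "kind_action Pos_crossing = extend_id X \<sigma>"
| "kind_action Neg_crossing = extend_id X \<sigma>inv"
| "kind_action Up_cusp = extend_id X u"
| "kind_action Down_cusp = extend_id X d"

lemma kind_action_closed: "x \<in> X \<Longrightarrow> kind_action \<kappa> x \<in> X"
  by (cases \<kappa>) (simp_all add: extend_id_def pointwise_laws)

lemma kind_action_commute: "kind_action \<kappa> \<circ> kind_action \<kappa>' = kind_action \<kappa>' \<circ> kind_action \<kappa>"
  by (cases \<kappa>; cases \<kappa>') (auto simp: fun_eq_iff extend_id_def pointwise_laws)

definition compose_kinds :: "break_kind list \<Rightarrow> 'a \<Rightarrow> 'a" where
  "compose_kinds ks = fold (\<lambda>\<kappa> g. kind_action \<kappa> \<circ> g) ks id"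

lemma fold_kind_action:
  "fold (\<lambda>\<kappa> g. kind_action \<kappa> \<circ> g) ks (g :: 'a \<Rightarrow> 'a) = compose_kinds ks \<circ> g"
proof (induction ks arbitrary: g)
  case (Cons \<kappa> ks)
  have "compose_kinds (\<kappa> # ks) = fold (\<lambda>\<kappa> g. kind_action \<kappa> \<circ> g) ks (kind_action \<kappa>)"
    by (simp add: compose_kinds_def)
  also have "\<dots> = compose_kinds ks \<circ> kind_action \<kappa>" by (rule Cons.IH)
  finally have "compose_kinds (\<kappa> # ks) \<circ> g = compose_kinds ks \<circ> (kind_action \<kappa> \<circ> g)"
    by (simp add: comp_assoc)
  moreover have "fold (\<lambda>\<kappa> g. kind_action \<kappa> \<circ> g) (\<kappa> # ks) g
      = fold (\<lambda>\<kappa> g. kind_action \<kappa> \<circ> g) ks (kind_action \<kappa> \<circ> g)" by simp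
  ultimately show ?case by (simp only: Cons.IH)
qed (simp add: compose_kinds_def)

lemma compose_kinds_append: "compose_kinds (ks @ ks') = compose_kinds ks' \<circ> compose_kinds ks"
proof -
  have "compose_kinds (ks @ ks') = fold (\<lambda>\<kappa> g. kind_action \<kappa> \<circ> g) ks' (compose_kinds ks)"
    by (simp add: compose_kinds_def)
  then show ?thesis by (simp only: fold_kind_action)
qed

lemma compose_kinds_concat_replicate:
  assumes "compose_kinds ks = id"
  shows "compose_kinds (concat (replicate n ks)) = id"
  by (induction n) (simp_all add: compose_kinds_append assms compose_kinds_def[of "[]"])

lemma compose_kinds_mset_eq:
  assumes "mset ks = mset ks'"
  shows "compose_kinds ks = compose_kinds ks'"
proof -
  have swap: "kind_action \<kappa> \<circ> (kind_action \<kappa>' \<circ> g) = kind_action \<kappa>' \<circ> (kind_action \<kappa> \<circ> g)"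
    for \<kappa> \<kappa>' and g :: "'a \<Rightarrow> 'a"
    by (simp only: comp_assoc[symmetric] kind_action_commute[of \<kappa> \<kappa>'])
  have comm: "(\<lambda>g. kind_action \<kappa> \<circ> g) \<circ> (\<lambda>g. kind_action \<kappa>' \<circ> g)
      = (\<lambda>g. kind_action \<kappa>' \<circ> g) \<circ> (\<lambda>g :: 'a \<Rightarrow> 'a. kind_action \<kappa> \<circ> g)" for \<kappa> \<kappa>'
    by (rule ext) (simp only: comp_apply swap[of \<kappa> \<kappa>'])
  have "fold (\<lambda>\<kappa> (g :: 'a \<Rightarrow> 'a). kind_action \<kappa> \<circ> g) ks = fold (\<lambda>\<kappa> g. kind_action \<kappa> \<circ> g) ks'"
    by (rule fold_multiset_equiv[OF comm assms])
  then show ?thesis by (simp add: compose_kinds_def)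
qed

lemma mset_concat_replicate: "mset (concat (replicate n xs)) = repeat_mset n (mset xs)"
  by (induction n) simp_all

text \<open>An up and a down cusp cancel against a positive crossing since u \<circ> d = \<sigma>\<inverse>, and the
  remaining positive crossings cancel the negative ones.\<close>
lemma compose_kinds_balanced:
  assumes "count (mset ks) Up_cusp = count (mset ks) Down_cusp"
    and "count (mset ks) Pos_crossing = count (mset ks) Neg_crossing + count (mset ks) Up_cusp"
  shows "compose_kinds ks = id"
proof -
  define ks' where "ks' = concat (replicate (count (mset ks) Up_cusp) [Up_cusp, Down_cusp, Pos_crossing])
    @ concat (replicate (count (mset ks) Neg_crossing) [Neg_crossing, Pos_crossing])"
  have "mset ks = mset ks'"
  proof (rule multiset_eqI)
    fix \<kappa>
    show "count (mset ks) \<kappa> = count (mset ks') \<kappa>"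
      using assms by (cases \<kappa>) (simp_all add: ks'_def mset_concat_replicate)
  qed
  then have "compose_kinds ks = compose_kinds ks'" by (rule compose_kinds_mset_eq)
  moreover have "compose_kinds [Up_cusp, Down_cusp, Pos_crossing] = id"
    "compose_kinds [Neg_crossing, Pos_crossing] = id"
    by (auto simp: compose_kinds_def fun_eq_iff extend_id_def pointwise_laws)
  ultimately show ?thesis
    by (simp add: ks'_def compose_kinds_append compose_kinds_concat_replicate)
qed

end

section \<open>Legendrian fronts\<close>

lemma cusp_up_not_down: "cusp_up \<gamma> t \<Longrightarrow> \<not> cusp_down \<gamma> t"
proof
  assume "cusp_up \<gamma> t" "cusp_down \<gamma> t"
  then obtain e1 e2 where
    e1: "e1 > 0" "strict_mono_on {t-e1<..<t+e1} (\<lambda>r. gz \<gamma> r - gy \<gamma> t * gx \<gamma> r)" and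
    e2: "e2 > 0" "strict_mono_on {t-e2<..<t+e2} (\<lambda>r. - (gz \<gamma> r - gy \<gamma> t * gx \<gamma> r))"
    unfolding cusp_up_def cusp_down_def by blast
  define r where "r = t + min e1 e2 / 2"
  have "gz \<gamma> t - gy \<gamma> t * gx \<gamma> t < gz \<gamma> r - gy \<gamma> t * gx \<gamma> r"
    by (rule strict_mono_onD[OF e1(2)]) (use e1(1) e2(1) in \<open>auto simp: r_def\<close>)
  moreover have "- (gz \<gamma> t - gy \<gamma> t * gx \<gamma> t) < - (gz \<gamma> r - gy \<gamma> t * gx \<gamma> r)"
    by (rule strict_mono_onD[OF e2(2)]) (use e1(1) e2(1) in \<open>auto simp: r_def\<close>)
  ultimately show False by simp
qed

locale generic_legendrian_front =
  fixes \<gamma> :: "real \<Rightarrow> R3"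
  assumes legendrian: "legendrian_knot \<gamma>" and generic: "generic_front \<gamma>"
begin

lemma finite_cusps: "finite (cusps \<gamma>)"
  and finite_crossings: "finite (crossings \<gamma>)"
  and cusp_up_or_down: "t \<in> cusps \<gamma> \<Longrightarrow> cusp_up \<gamma> t \<or> cusp_down \<gamma> t"
  and crossing_not_cusp: "(t, s) \<in> crossings \<gamma> \<Longrightarrow> t \<notin> cusps \<gamma> \<and> s \<notin> cusps \<gamma>"
  using generic unfolding generic_front_def by blast+

lemma crossingsD: "(t, s) \<in> crossings \<gamma> \<Longrightarrow>
    t \<in> {0..<1} \<and> s \<in> {0..<1} \<and> t \<noteq> s \<and> gx \<gamma> t = gx \<gamma> s \<and> gz \<gamma> t = gz \<gamma> s"
  unfolding crossings_def by blast

lemma undercrossingsD: "(t, s) \<in> undercrossings \<gamma> \<Longrightarrow> (t, s) \<in> crossings \<gamma> \<and> gy \<gamma> s < gy \<gamma> t"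
  unfolding undercrossings_def by blast

lemma finite_breaks: "finite (breaks \<gamma>)"
proof -
  have "undercrossings \<gamma> \<subseteq> crossings \<gamma>" using undercrossingsD by auto
  then show ?thesis
    unfolding breaks_def using finite_cusps finite_crossings finite_subset by blast
qed

lemma breaks_in_unit: "breaks \<gamma> \<subseteq> {0..<1}"
  unfolding breaks_def cusps_def using undercrossingsD crossingsD by fastforce

text \<open>Generic fronts have no triple points.\<close>
lemma over_strand_unique:
  assumes "(t, s) \<in> undercrossings \<gamma>" "(t, s') \<in> undercrossings \<gamma>"
  shows "s' = s"
proof (rule ccontr)
  assume "s' \<noteq> s"
  moreover have "(t, s) \<in> crossings \<gamma>" "(t, s') \<in> crossings \<gamma>" using assms undercrossingsD by auto
  ultimately show False
    using generic crossingsD unfolding generic_front_def by metis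
qed

definition over_strand :: "real \<Rightarrow> real" where
  "over_strand t = (THE s. (t, s) \<in> undercrossings \<gamma>)"

lemma over_strand_eq: "(t, s) \<in> undercrossings \<gamma> \<Longrightarrow> over_strand t = s"
  unfolding over_strand_def by (rule the_equality) (auto intro: over_strand_unique)

text \<open>Along a Legendrian front z' = y x', so the cross product equals x'(s) x'(t) (y(t) - y(s)),
  which is nonzero because crossings avoid cusps and the two strands differ in y.\<close>
lemma front_cross_nonzero:
  assumes "(t, s) \<in> undercrossings \<gamma>"
  shows "front_cross \<gamma> s t \<noteq> 0"
proof -
  have c: "(t, s) \<in> crossings \<gamma>" and y: "gy \<gamma> s < gy \<gamma> t" using undercrossingsD assms by auto
  have "dgx \<gamma> t \<noteq> 0" "dgx \<gamma> s \<noteq> 0"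
    using crossing_not_cusp[OF c] crossingsD[OF c] unfolding cusps_def by auto
  moreover have "\<And>r. dgz \<gamma> r = gy \<gamma> r * dgx \<gamma> r" using legendrian unfolding legendrian_knot_def by blast
  then have "front_cross \<gamma> s t = dgx \<gamma> s * dgx \<gamma> t * (gy \<gamma> t - gy \<gamma> s)"
    unfolding front_cross_def by (simp add: algebra_simps)
  ultimately show ?thesis using y by simp
qed

definition kind_of :: "real \<Rightarrow> break_kind" where
  "kind_of t = (if t \<in> cusps \<gamma> then (if cusp_up \<gamma> t then Up_cusp else Down_cusp)
     else if front_cross \<gamma> (over_strand t) t > 0 then Pos_crossing else Neg_crossing)"

definition kinds :: "break_kind list" where
  "kinds = map kind_of (sorted_list_of_set (breaks \<gamma>))"

lemma count_kinds: "count (mset kinds) \<kappa> = card {b\<in>breaks \<gamma>. kind_of b = \<kappa>}"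
proof -
  have "count (mset kinds) \<kappa> = length (filter (\<lambda>b. \<kappa> = kind_of b) (sorted_list_of_set (breaks \<gamma>)))"
    by (simp only: kinds_def count_mset count_list_eq_length_filter filter_map length_map comp_def)
  also have "\<dots> = card {b\<in>breaks \<gamma>. kind_of b = \<kappa>}"
    using finite_breaks by (simp add: distinct_length_filter Int_def conj_commute eq_commute)
  finally show ?thesis .
qed

lemma n_up_kinds: "n_up \<gamma> = count (mset kinds) Up_cusp"
proof -
  have "{t \<in> cusps \<gamma>. cusp_up \<gamma> t} = {b\<in>breaks \<gamma>. kind_of b = Up_cusp}"
    by (auto simp: kind_of_def breaks_def)
  then show ?thesis by (simp add: n_up_def count_kinds)
qed

lemma n_down_kinds: "n_down \<gamma> = count (mset kinds) Down_cusp"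
proof -
  have "{t \<in> cusps \<gamma>. cusp_down \<gamma> t} = {b\<in>breaks \<gamma>. kind_of b = Down_cusp}"
    using cusp_up_or_down cusp_up_not_down by (auto simp: kind_of_def breaks_def)
  then show ?thesis by (simp add: n_down_def count_kinds)
qed

lemma writhe_kinds: "writhe \<gamma> = int (count (mset kinds) Pos_crossing) - int (count (mset kinds) Neg_crossing)"
proof -
  define U where "U = fst ` undercrossings \<gamma>"
  have U_breaks: "U \<subseteq> breaks \<gamma>" "\<And>t. t \<in> U \<Longrightarrow> t \<notin> cusps \<gamma>"
    using crossing_not_cusp undercrossingsD by (force simp: U_def breaks_def)+
  have "undercrossings \<gamma> = (\<lambda>t. (t, over_strand t)) ` U"
    using over_strand_eq by (force simp: U_def)
  moreover have "inj_on (\<lambda>t. (t, over_strand t)) U" by (rule inj_onI) simp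
  ultimately have "writhe \<gamma> = (\<Sum>t\<in>U. if front_cross \<gamma> (over_strand t) t > 0 then 1 else -1)"
    unfolding writhe_def by (simp add: sum.reindex)
  also have "\<dots> = int (card {t\<in>U. front_cross \<gamma> (over_strand t) t > 0})
      - int (card {t\<in>U. \<not> front_cross \<gamma> (over_strand t) t > 0})"
    using finite_subset[OF U_breaks(1) finite_breaks] by (simp add: sum.If_cases Int_def sum_negf)
  also have "{t\<in>U. front_cross \<gamma> (over_strand t) t > 0} = {b\<in>breaks \<gamma>. kind_of b = Pos_crossing}"
    using U_breaks by (auto simp: kind_of_def breaks_def U_def split: if_splits)
  also have "{t\<in>U. \<not> front_cross \<gamma> (over_strand t) t > 0} = {b\<in>breaks \<gamma>. kind_of b = Neg_crossing}"
    using U_breaks by (auto simp: kind_of_def breaks_def U_def split: if_splits)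
  finally show ?thesis by (simp add: count_kinds)
qed

lemma tb_kinds: "tb \<gamma> = real (count (mset kinds) Pos_crossing) - real (count (mset kinds) Neg_crossing)
    - (real (count (mset kinds) Up_cusp) + real (count (mset kinds) Down_cusp)) / 2"
  by (simp add: tb_def writhe_kinds n_up_kinds n_down_kinds)

lemma rot_kinds: "rot \<gamma> = (real (count (mset kinds) Down_cusp) - real (count (mset kinds) Up_cusp)) / 2"
  by (simp add: rot_def n_up_kinds n_down_kinds)

end

lemma kinds_balanced_if_opposite_tb_rot:
  assumes "generic_legendrian_front \<gamma>1" "generic_legendrian_front \<gamma>2"
    and "tb \<gamma>1 = - tb \<gamma>2" "rot \<gamma>1 = - rot \<gamma>2"
  defines "K \<equiv> mset (generic_legendrian_front.kinds \<gamma>1 @ generic_legendrian_front.kinds \<gamma>2)"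
  shows "count K Up_cusp = count K Down_cusp"
    and "count K Pos_crossing = count K Neg_crossing + count K Up_cusp"
proof -
  interpret K1: generic_legendrian_front \<gamma>1 by (rule assms(1))
  interpret K2: generic_legendrian_front \<gamma>2 by (rule assms(2))
  have "real (count K Up_cusp) = real (count K Down_cusp)"
    using assms(4) by (simp add: K_def K1.rot_kinds K2.rot_kinds field_simps)
  then show up_down: "count K Up_cusp = count K Down_cusp" by (simp only: of_nat_eq_iff)
  have "real (count K Pos_crossing) = real (count K Neg_crossing) + real (count K Up_cusp)"
    using assms(3) up_down by (simp add: K_def K1.tb_kinds K2.tb_kinds field_simps)
  then show "count K Pos_crossing = count K Neg_crossing + count K Up_cusp" by linarith
qed

locale colored_legendrian_front = permutation_GL_rack + generic_legendrian_front
begin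

definition jump :: "real \<Rightarrow> 'a \<Rightarrow> 'a" where
  "jump b = kind_action (kind_of b)"

lemma circle_jumps: "circle_jumps X (breaks \<gamma>) jump"
  by unfold_locales (simp_all add: finite_breaks breaks_in_unit jump_def kind_action_closed)

lemma cusp_rule_iff:
  assumes "t \<in> cusps \<gamma>" "x \<in> X"
  shows "((cusp_up \<gamma> t \<longrightarrow> y = u x) \<and> (cusp_down \<gamma> t \<longrightarrow> y = d x)) \<longleftrightarrow> y = jump t x"
  using assms cusp_up_or_down[OF assms(1)] cusp_up_not_down[of \<gamma> t]
  by (auto simp: jump_def kind_of_def extend_id_def)

lemma crossing_rule_iff:
  assumes uc: "(t, s) \<in> undercrossings \<gamma>" and X: "x \<in> X" "y \<in> X" "z \<in> X"
  shows "((front_cross \<gamma> s t > 0 \<longrightarrow> y = op x z) \<and> (front_cross \<gamma> s t < 0 \<longrightarrow> x = op y z))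
         \<longleftrightarrow> y = jump t x"
proof -
  have "t \<notin> cusps \<gamma>" using uc undercrossingsD crossing_not_cusp by blast
  then have jump_t: "jump t = (if front_cross \<gamma> s t > 0 then extend_id X \<sigma> else extend_id X \<sigma>inv)"
    using over_strand_eq[OF uc] by (simp add: jump_def kind_of_def)
  have "x = \<sigma> y \<longleftrightarrow> y = \<sigma>inv x" using X \<sigma>_\<sigma>inv \<sigma>inv_\<sigma> by metis
  then show ?thesis
    using front_cross_nonzero[OF uc] jump_t X op_eq by (auto simp: extend_id_def)
qed

lemma is_coloring_iff: "is_coloring X op u d \<gamma> c \<longleftrightarrow> circle_jumps.jump_coloring X (breaks \<gamma>) jump c"
proof (cases "\<forall>t. c t \<in> X")
  case False
  then show ?thesis unfolding is_coloring_def circle_jumps.jump_coloring_def[OF circle_jumps] by blast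
next
  case True
  then have cX: "\<And>t. c t \<in> X" by blast
  let ?rule = "\<lambda>t. \<exists>e>0. \<forall>r1\<in>{t-e<..<t}. \<forall>r2\<in>{t<..<t+e}. c r2 = jump t (c r1)"
  have "(\<forall>(t, s)\<in>undercrossings \<gamma>. \<exists>e>0. \<forall>r1\<in>{t-e<..<t}. \<forall>r2\<in>{t<..<t+e}.
      (front_cross \<gamma> s t > 0 \<longrightarrow> c r2 = op (c r1) (c s)) \<and> (front_cross \<gamma> s t < 0 \<longrightarrow> c r1 = op (c r2) (c s)))
    \<longleftrightarrow> (\<forall>(t, s)\<in>undercrossings \<gamma>. ?rule t)"
    by (rule ball_cong[OF refl], clarify) (simp add: crossing_rule_iff cX)
  also have "\<dots> \<longleftrightarrow> (\<forall>t\<in>fst ` undercrossings \<gamma>. ?rule t)"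
    by force
  finally have crossing_rules: "(\<forall>(t, s)\<in>undercrossings \<gamma>. \<exists>e>0. \<forall>r1\<in>{t-e<..<t}. \<forall>r2\<in>{t<..<t+e}.
      (front_cross \<gamma> s t > 0 \<longrightarrow> c r2 = op (c r1) (c s)) \<and> (front_cross \<gamma> s t < 0 \<longrightarrow> c r1 = op (c r2) (c s)))
    \<longleftrightarrow> (\<forall>t\<in>fst ` undercrossings \<gamma>. ?rule t)" .
  have cusp_rules: "(\<forall>t\<in>cusps \<gamma>. \<exists>e>0. \<forall>r1\<in>{t-e<..<t}. \<forall>r2\<in>{t<..<t+e}.
      (cusp_up \<gamma> t \<longrightarrow> c r2 = u (c r1)) \<and> (cusp_down \<gamma> t \<longrightarrow> c r2 = d (c r1)))
    \<longleftrightarrow> (\<forall>t\<in>cusps \<gamma>. ?rule t)"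
    by (rule ball_cong[OF refl]) (simp add: cusp_rule_iff cX)
  show ?thesis
    unfolding is_coloring_def circle_jumps.jump_coloring_def[OF circle_jumps]
      circle_jumps.jumps_per_def[OF circle_jumps] breaks_per_def[symmetric] cusp_rules crossing_rules
    by (simp only: breaks_def ball_Un)
qed

lemma Col_eq_card_fixpoints: "Col X op u d \<gamma> = card {x\<in>X. compose_kinds kinds x = x}"
proof -
  interpret circle_jumps X "breaks \<gamma>" jump by (rule circle_jumps)
  have "monodromy = compose_kinds kinds"
    by (simp add: monodromy_def compose_kinds_def kinds_def fold_map comp_def jump_def)
  moreover have "Col X op u d \<gamma> = card (forget_jumps ` {c. jump_coloring c})"
    unfolding Col_def forget_jumps_def jumps_per_def breaks_per_def is_coloring_iff ..
  ultimately show ?thesis using card_jump_colorings by simp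
qed

end

theorem theorem5p1:
  fixes \<gamma>1 \<gamma>2 :: "real \<Rightarrow> R3"
    and X :: "'a set" and op :: "'a \<Rightarrow> 'a \<Rightarrow> 'a" and u d :: "'a \<Rightarrow> 'a"
  assumes "legendrian_knot \<gamma>1" and "legendrian_knot \<gamma>2"
    and "generic_front \<gamma>1" and "generic_front \<gamma>2"
    and "same_knot_type \<gamma>1 \<gamma>2"
    and "tb \<gamma>1 = - tb \<gamma>2" and "rot \<gamma>1 = - rot \<gamma>2"
    and "perm_GL_rack X op u d"
  shows "Col X op u d \<gamma>1 = Col X op u d \<gamma>2"
proof -
  obtain \<sigma> where "permutation_GL_rack X op u d \<sigma>"
    using assms(8) unfolding perm_GL_rack_def permutation_GL_rack_def by blast
  then interpret K1: colored_legendrian_front X op u d \<sigma> \<gamma>1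
    + K2: colored_legendrian_front X op u d \<sigma> \<gamma>2
    using assms(1-4) by (simp_all add: colored_legendrian_front_def generic_legendrian_front_def)
  have "count (mset (K1.kinds @ K2.kinds)) Up_cusp = count (mset (K1.kinds @ K2.kinds)) Down_cusp"
    "count (mset (K1.kinds @ K2.kinds)) Pos_crossing
       = count (mset (K1.kinds @ K2.kinds)) Neg_crossing + count (mset (K1.kinds @ K2.kinds)) Up_cusp"
    using kinds_balanced_if_opposite_tb_rot assms(6,7) K1.generic_legendrian_front_axioms
      K2.generic_legendrian_front_axioms by blast+
  then have "K1.compose_kinds (K2.kinds @ K1.kinds) = id" "K1.compose_kinds (K1.kinds @ K2.kinds) = id"
    by (simp_all add: K1.compose_kinds_balanced add.commute)
  then have "{x\<in>X. K1.compose_kinds K1.kinds x = x} = {x\<in>X. K1.compose_kinds K2.kinds x = x}"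
    unfolding K1.compose_kinds_append by (rule fixpoints_eq_if_inverse)
  then show ?thesis by (simp add: K1.Col_eq_card_fixpoints K2.Col_eq_card_fixpoints)
qed

end
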